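(* (Quantum Efron–Stein inequality.) Let $\varrho=\rho_1\otimes\cdots\otimes\rho_n$ be a product state on $\mathcal K=\bigotimes_{i=1}^n\mathcal H_i$ (finite-dimensional Hilbert spaces) and let $X$ be an observable on $\mathcal K$. Then $$\mathrm{Var}_\varrho[X]\le\sum_{i=1}^n\mathbb E_\varrho[(\mathcal D_iX)^2].$$
   Context: $\mathbb E_\varrho[Y]=\mathrm{Tr}[\varrho Y]$ and $\mathrm{Var}_\varrho[X]=\mathbb E_\varrho[X^2]-\mathbb E_\varrho[X]^2$. For $i\in[n]$, $\mathcal E_iX=\mathrm{Tr}_i[(\rho_i\otimes I)X]$, regarded as an operator on $\mathcal K$ by tensoring with the identity on $\mathcal H_i$ (so $\mathcal E_i(Y_1\otimes\cdots\otimes Y_n)=\mathrm{Tr}[\rho_iY_i]\,Y_1\otimes\cdots\otimes I\otimes\cdots\otimes Y_n$ with $I$ in position $i$), and $\mathcal D_iX=X-\mathcal E_iX$. *)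

theory Defs
  imports Complex_Main "HOL-Library.FuncSet"
begin

text \<open>Finite-dimensional Hilbert spaces H_i = C^(d i), i < n. The tensor product
  K = H_0 (x) ... (x) H_(n-1) has the product basis indexed by multi-indices
  x with x i < d i for i < n (extensional: x i = undefined for i >= n).
  Operators on K are given by their matrix entries X x y w.r.t. that basis.\<close>

type_synonym kop = "(nat \<Rightarrow> nat) \<Rightarrow> (nat \<Rightarrow> nat) \<Rightarrow> complex"

definition basis :: "nat \<Rightarrow> (nat \<Rightarrow> nat) \<Rightarrow> (nat \<Rightarrow> nat) set" where
  "basis n d = Pi\<^sub>E {..<n} (\<lambda>i. {..<d i})"

definition kmult :: "nat \<Rightarrow> (nat \<Rightarrow> nat) \<Rightarrow> kop \<Rightarrow> kop \<Rightarrow> kop" where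
  "kmult n d A B = (\<lambda>x y. \<Sum>z\<in>basis n d. A x z * B z y)"

definition ktrace :: "nat \<Rightarrow> (nat \<Rightarrow> nat) \<Rightarrow> kop \<Rightarrow> complex" where
  "ktrace n d A = (\<Sum>x\<in>basis n d. A x x)"

definition khermitian :: "nat \<Rightarrow> (nat \<Rightarrow> nat) \<Rightarrow> kop \<Rightarrow> bool" where
  "khermitian n d X = (\<forall>x\<in>basis n d. \<forall>y\<in>basis n d. X x y = cnj (X y x))"

definition density_matrix :: "nat \<Rightarrow> (nat \<Rightarrow> nat \<Rightarrow> complex) \<Rightarrow> bool" where
  "density_matrix m r =
     ((\<forall>a<m. \<forall>b<m. r a b = cnj (r b a)) \<and>
      (\<forall>v :: nat \<Rightarrow> complex. 0 \<le> Re (\<Sum>a<m. \<Sum>b<m. cnj (v a) * r a b * v b)) \<and>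
      (\<Sum>a<m. r a a) = 1)"

definition prod_state :: "nat \<Rightarrow> (nat \<Rightarrow> nat \<Rightarrow> nat \<Rightarrow> complex) \<Rightarrow> kop" where
  "prod_state n \<rho> = (\<lambda>x y. \<Prod>i<n. \<rho> i (x i) (y i))"

definition expect :: "nat \<Rightarrow> (nat \<Rightarrow> nat) \<Rightarrow> kop \<Rightarrow> kop \<Rightarrow> complex" where
  "expect n d \<sigma> Y = ktrace n d (kmult n d \<sigma> Y)"

definition variance :: "nat \<Rightarrow> (nat \<Rightarrow> nat) \<Rightarrow> kop \<Rightarrow> kop \<Rightarrow> complex" where
  "variance n d \<sigma> X = expect n d \<sigma> (kmult n d X X) - (expect n d \<sigma> X)^2"

text \<open>E_i X = Tr_i[(rho_i (x) I) X], tensored with the identity on H_i: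
  (E_i X)(x,y) = [x i = y i] * sum_(a,b) rho_i(a,b) X(x[i:=b], y[i:=a]).\<close>
definition cond_exp :: "(nat \<Rightarrow> nat) \<Rightarrow> (nat \<Rightarrow> nat \<Rightarrow> nat \<Rightarrow> complex) \<Rightarrow> nat \<Rightarrow> kop \<Rightarrow> kop" where
  "cond_exp d \<rho> i X = (\<lambda>x y. if x i = y i
      then (\<Sum>a<d i. \<Sum>b<d i. \<rho> i a b * X (x(i := b)) (y(i := a))) else 0)"

definition diff_op :: "(nat \<Rightarrow> nat) \<Rightarrow> (nat \<Rightarrow> nat \<Rightarrow> nat \<Rightarrow> complex) \<Rightarrow> nat \<Rightarrow> kop \<Rightarrow> kop" where
  "diff_op d \<rho> i X = (\<lambda>x y. X x y - cond_exp d \<rho> i X x y)"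

end

(* Write P_k = E_(k-1) ... E_0. Each E_i preserves E_rho, annihilates D_i, and satisfies
   E_i(A C) = E_i(A) C and E_i(C A) = C E_i(A) whenever C acts trivially on the i-th factor.
   Hence W = E_i W + D_i W is orthogonal for the pairing (A, C) -> E_rho[A C], i.e.
   E_rho[W^2] = E_rho[(E_i W)^2] + E_rho[(D_i W)^2]. Applying this to W = P_k X for k < n and
   using D_k P_k = P_k D_k gives E_rho[X^2] = sum_k E_rho[(P_k D_k X)^2] + E_rho[(P_n X)^2],
   where P_n X is the scalar E_rho[X]; so Var_rho[X] = sum_k E_rho[(P_k D_k X)^2].
   Finally E_rho[Z^2] >= 0 for every observable Z, because a tensor product of positive
   semidefinite matrices is positive semidefinite (factor each rho_i as a Gram matrix); so every
   E_i, and hence P_k, contracts W -> E_rho[W^2] on observables, and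
   E_rho[(P_k D_k X)^2] <= E_rho[(D_k X)^2]. *)

theory Submission
  imports Defs
begin

lemma sum_eq_single:
  assumes "finite A" "a \<in> A" "\<And>c. c \<in> A \<Longrightarrow> c \<noteq> a \<Longrightarrow> f c = 0"
  shows "sum f A = f a"
  using sum.mono_neutral_right[of A "{a}" f] assms by auto

lemma sum_PiE_insert:
  assumes "i \<notin> S"
  shows "(\<Sum>x\<in>PiE (insert i S) T. G x) = (\<Sum>c\<in>T i. \<Sum>z\<in>PiE S T. G (z(i:=c)))"
proof -
  have "sum G (PiE (insert i S) T) = sum G ((\<lambda>(c,z). z(i:=c)) ` (T i \<times> PiE S T))"
    by (simp add: PiE_insert_eq)
  also have "\<dots> = sum (G \<circ> (\<lambda>(c,z). z(i:=c))) (T i \<times> PiE S T)"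
    by (rule sum.reindex[OF inj_combinator[OF assms]])
  also have "\<dots> = (\<Sum>c\<in>T i. \<Sum>z\<in>PiE S T. G (z(i:=c)))"
    by (simp add: sum.cartesian_product case_prod_unfold comp_def)
  finally show ?thesis .
qed

lemma sum_swap_pairs:
  "(\<Sum>a\<in>A. \<Sum>b\<in>B. \<Sum>c\<in>C. \<Sum>e\<in>D. f a b c e) = (\<Sum>b\<in>B. \<Sum>e\<in>D. \<Sum>a\<in>A. \<Sum>c\<in>C. f a b c e)"
proof -
  have "(\<Sum>a\<in>A. \<Sum>b\<in>B. \<Sum>c\<in>C. \<Sum>e\<in>D. f a b c e) = (\<Sum>b\<in>B. \<Sum>a\<in>A. \<Sum>c\<in>C. \<Sum>e\<in>D. f a b c e)"
    by (rule sum.swap)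
  also have "\<dots> = (\<Sum>b\<in>B. \<Sum>e\<in>D. \<Sum>a\<in>A. \<Sum>c\<in>C. f a b c e)"
    by (intro sum.cong refl) (simp only: sum.swap[of _ C D] sum.swap[of _ A D])
  finally show ?thesis .
qed

section \<open>Positive semidefinite matrices\<close>

definition quad_form :: "'a set \<Rightarrow> ('a \<Rightarrow> 'a \<Rightarrow> complex) \<Rightarrow> ('a \<Rightarrow> complex) \<Rightarrow> complex" where
  "quad_form A r v = (\<Sum>a\<in>A. \<Sum>b\<in>A. cnj (v a) * r a b * v b)"

definition hermitian_on :: "'a set \<Rightarrow> ('a \<Rightarrow> 'a \<Rightarrow> complex) \<Rightarrow> bool" where
  "hermitian_on A r \<longleftrightarrow> (\<forall>a\<in>A. \<forall>b\<in>A. r a b = cnj (r b a))"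

definition psd_on :: "'a set \<Rightarrow> ('a \<Rightarrow> 'a \<Rightarrow> complex) \<Rightarrow> bool" where
  "psd_on A r \<longleftrightarrow> hermitian_on A r \<and> (\<forall>v. 0 \<le> Re (quad_form A r v))"

lemma density_matrix_iff: "density_matrix m r \<longleftrightarrow> psd_on {..<m} r \<and> (\<Sum>a<m. r a a) = 1"
  unfolding density_matrix_def psd_on_def hermitian_on_def quad_form_def by blast

lemma khermitian_iff: "khermitian n d X \<longleftrightarrow> hermitian_on (basis n d) X"
  by (simp add: khermitian_def hermitian_on_def)

lemma hermitian_onD: "hermitian_on A r \<Longrightarrow> a \<in> A \<Longrightarrow> b \<in> A \<Longrightarrow> r a b = cnj (r b a)"
  unfolding hermitian_on_def by blast

lemma hermitian_on_diff:
  "hermitian_on A r \<Longrightarrow> hermitian_on A s \<Longrightarrow> hermitian_on A (\<lambda>a b. r a b - s a b)"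
  unfolding hermitian_on_def by (metis complex_cnj_diff)

lemma quad_form_lessThan_Suc:
  fixes v :: "nat \<Rightarrow> complex"
  assumes "hermitian_on {..<Suc m} r"
  defines "s \<equiv> \<Sum>a<m. cnj (v a) * r a m"
  shows "quad_form {..<Suc m} r (v(m:=t))
           = quad_form {..<m} r v + t * s + cnj (t * s) + cnj t * t * r m m"
proof -
  have row: "(\<Sum>b<m. cnj t * r m b * v b) = cnj (t * s)"
    unfolding s_def cnj_sum sum_distrib_left complex_cnj_mult
  proof (intro sum.cong refl)
    fix b assume "b \<in> {..<m}"
    then have "r m b = cnj (r b m)" by (intro hermitian_onD[OF assms(1)]) auto
    then show "cnj t * r m b * v b = cnj t * (cnj (cnj (v b)) * cnj (r b m))" by simp
  qed
  have col: "(\<Sum>a<m. cnj (v a) * r a m * t) = t * s"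
    unfolding s_def by (simp add: sum_distrib_left mult.commute)
  have "quad_form {..<Suc m} r (v(m:=t))
      = (\<Sum>a<m. (\<Sum>b<m. cnj (v a) * r a b * v b) + cnj (v a) * r a m * t)
        + ((\<Sum>b<m. cnj t * r m b * v b) + cnj t * r m m * t)"
    unfolding quad_form_def by (simp add: sum.lessThan_Suc)
  also have "\<dots> = quad_form {..<m} r v + t * s + cnj (t * s) + cnj t * t * r m m"
    unfolding row sum.distrib col quad_form_def by (simp add: algebra_simps)
  finally show ?thesis .
qed

lemma psd_on_column_zero:
  assumes psd: "psd_on {..<Suc m} r" and zero: "r m m = 0" and a: "a < m"
  shows "r a m = 0"
proof (rule ccontr)
  assume nz: "r a m \<noteq> 0"
  define v :: "nat \<Rightarrow> complex" where "v = (\<lambda>k. if k = a then 1 else 0)"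
  define q where "q = Re (quad_form {..<m} r v)"
  define x where "x = (\<bar>q\<bar> + 1) / (2 * (cmod (r a m))\<^sup>2)"
  define t where "t = - of_real x * cnj (r a m)"
  have herm: "hermitian_on {..<Suc m} r" using psd by (simp add: psd_on_def)
  have "(\<Sum>b<m. cnj (v b) * r b m) = r a m"
    unfolding v_def using a by (subst sum_eq_single[where a=a]) auto
  then have "quad_form {..<Suc m} r (v(m:=t)) = quad_form {..<m} r v + t * r a m + cnj (t * r a m)"
    using quad_form_lessThan_Suc[OF herm, of v t] zero by simp
  also have "t * r a m = - of_real x * (r a m * cnj (r a m))"
    unfolding t_def by (simp add: ac_simps)
  also have "\<dots> = - of_real (x * (cmod (r a m))\<^sup>2)"
    by (simp only: complex_norm_square[symmetric] of_real_mult mult_minus_left)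
  finally have "Re (quad_form {..<Suc m} r (v(m:=t))) = q - 2 * x * (cmod (r a m))\<^sup>2"
    unfolding q_def by (simp del: fun_upd_apply)
  also have "2 * x * (cmod (r a m))\<^sup>2 = \<bar>q\<bar> + 1"
    unfolding x_def using nz by simp
  finally show False using psd unfolding psd_on_def by (smt (verit))
qed

lemma bilinear_form_gram:
  assumes "\<forall>a\<in>A. \<forall>b\<in>A. r a b = (\<Sum>l\<in>L. u l a * cnj (u l b))"
  shows "(\<Sum>a\<in>A. \<Sum>b\<in>A. cnj (x a) * r a b * y b)
           = (\<Sum>l\<in>L. cnj (\<Sum>a\<in>A. cnj (u l a) * x a) * (\<Sum>b\<in>A. cnj (u l b) * y b))"
proof -
  have "(\<Sum>a\<in>A. \<Sum>b\<in>A. cnj (x a) * r a b * y b)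
      = (\<Sum>a\<in>A. \<Sum>b\<in>A. \<Sum>l\<in>L. u l a * cnj (x a) * (cnj (u l b) * y b))"
    using assms by (simp add: sum_distrib_left sum_distrib_right mult_ac)
  also have "\<dots> = (\<Sum>a\<in>A. \<Sum>l\<in>L. \<Sum>b\<in>A. u l a * cnj (x a) * (cnj (u l b) * y b))"
    by (intro sum.cong refl) (rule sum.swap)
  also have "\<dots> = (\<Sum>l\<in>L. \<Sum>a\<in>A. \<Sum>b\<in>A. u l a * cnj (x a) * (cnj (u l b) * y b))"
    by (rule sum.swap)
  also have "\<dots> = (\<Sum>l\<in>L. cnj (\<Sum>a\<in>A. cnj (u l a) * x a) * (\<Sum>b\<in>A. cnj (u l b) * y b))"
    unfolding cnj_sum sum_product by (simp add: mult_ac)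
  finally show ?thesis .
qed

(* When r m m = 0 the quotient is 0, so the complement is just the restriction of r. *)
lemma psd_on_schur_complement:
  assumes psd: "psd_on {..<Suc m} r"
  shows "psd_on {..<m} (\<lambda>a b. r a b - r a m * r m b / r m m)"
proof -
  have herm: "hermitian_on {..<Suc m} r" using psd by (simp add: psd_on_def)
  have r_cnj: "r a b = cnj (r b a)" if "a \<le> m" "b \<le> m" for a b
    using that by (intro hermitian_onD[OF herm]) auto
  define p where "p = r m m"
  have p_real: "cnj p = p" unfolding p_def by (rule sym, rule r_cnj) simp_all
  have "hermitian_on {..<m} (\<lambda>a b. r a b - r a m * r m b / p)"
    unfolding hermitian_on_def
  proof (intro ballI)
    fix a b assume "a \<in> {..<m}" "b \<in> {..<m}"
    then have "r a b = cnj (r b a)" "r a m = cnj (r m a)" "r m b = cnj (r b m)"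
      by (auto intro!: r_cnj)
    then show "r a b - r a m * r m b / p = cnj (r b a - r b m * r m a / p)"
      using p_real by simp
  qed
  moreover have "0 \<le> Re (quad_form {..<m} (\<lambda>a b. r a b - r a m * r m b / p) v)" for v
  proof -
    define s where "s = (\<Sum>a<m. cnj (v a) * r a m)"
    define t where "t = - cnj s / p"
    have row: "(\<Sum>b<m. r m b * v b) = cnj s"
    proof -
      have "r m b = cnj (r b m)" if "b < m" for b using that by (intro r_cnj) auto
      then show ?thesis unfolding s_def cnj_sum by (intro sum.cong refl) (simp add: mult.commute)
    qed
    have "quad_form {..<m} (\<lambda>a b. r a b - r a m * r m b / p) v
        = quad_form {..<m} r v - s * (\<Sum>b<m. r m b * v b) / p"
      unfolding quad_form_def s_def
      by (simp add: algebra_simps sum_subtractf sum_distrib_left sum_distrib_right sum_divide_distrib)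
    also have "\<dots> = quad_form {..<Suc m} r (v(m:=t))"
      unfolding quad_form_lessThan_Suc[OF herm] s_def[symmetric] row p_def[symmetric]
      using p_real by (cases "p = 0") (simp_all add: t_def field_simps)
    finally show ?thesis using psd by (simp add: psd_on_def)
  qed
  ultimately show ?thesis unfolding psd_on_def p_def by blast
qed

lemma psd_on_last_column_factor:
  fixes r :: "nat \<Rightarrow> nat \<Rightarrow> complex"
  assumes psd: "psd_on {..<Suc m} r"
  obtains w where "\<And>a b. w a * cnj (w b) = r a m * cnj (r b m) / r m m"
    and "\<And>a. a \<le> m \<Longrightarrow> r a m = w a * cnj (w m)"
proof -
  have herm: "hermitian_on {..<Suc m} r" using psd by (simp add: psd_on_def)
  define p where "p = r m m"
  have "0 \<le> Re (quad_form {..<Suc m} r ((\<lambda>_. 0)(m := 1)))"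
    using psd by (simp add: psd_on_def)
  then have p_nonneg: "0 \<le> Re p"
    unfolding quad_form_lessThan_Suc[OF herm] by (simp add: quad_form_def p_def)
  have p_real: "cnj p = p" unfolding p_def by (rule sym, rule hermitian_onD[OF herm]) simp_all
  then have p_eq: "p = of_real (Re p)" by (simp add: Reals_cnj_iff)
  define w where "w a = r a m / of_real (sqrt (Re p))" for a
  have sqrt_p: "of_real (sqrt (Re p)) * of_real (sqrt (Re p)) = p"
    using p_nonneg by (subst (3) p_eq) (simp flip: of_real_mult)
  have ww: "w a * cnj (w b) = r a m * cnj (r b m) / p" for a b
    by (simp add: w_def times_divide_times_eq sqrt_p)
  have col: "r a m = w a * cnj (w m)" if "a \<le> m" for a
  proof (cases "p = 0")
    case True
    then have "r a m = 0"
      using psd_on_column_zero[OF psd] that p_def by (cases "a = m") auto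
    then show ?thesis using True by (simp add: w_def)
  next
    case False
    then show ?thesis unfolding ww using p_real by (simp add: p_def)
  qed
  show thesis using that ww col unfolding p_def by blast
qed

lemma psd_on_gram_decomposition:
  fixes r :: "nat \<Rightarrow> nat \<Rightarrow> complex"
  assumes "psd_on {..<m} r"
  shows "\<exists>u. \<forall>a<m. \<forall>b<m. r a b = (\<Sum>l<m. u l a * cnj (u l b))"
  using assms
proof (induction m arbitrary: r)
  case 0
  then show ?case by simp
next
  case (Suc m)
  have r_cnj: "r a b = cnj (r b a)" if "a \<le> m" "b \<le> m" for a b
    using Suc.prems that by (intro hermitian_onD) (auto simp: psd_on_def)
  obtain w where ww: "\<And>a b. w a * cnj (w b) = r a m * cnj (r b m) / r m m"
    and col: "\<And>a. a \<le> m \<Longrightarrow> r a m = w a * cnj (w m)"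
    using psd_on_last_column_factor[OF Suc.prems] by blast
  obtain u where u: "\<forall>a<m. \<forall>b<m. r a b - r a m * r m b / r m m = (\<Sum>l<m. u l a * cnj (u l b))"
    using Suc.IH[OF psd_on_schur_complement[OF Suc.prems]] by blast
  define u' where "u' l = (if l < m then (\<lambda>a. if a < m then u l a else 0) else w)" for l
  have "r a b = (\<Sum>l<Suc m. u' l a * cnj (u' l b))" if ab: "a < Suc m" "b < Suc m" for a b
  proof -
    have split: "(\<Sum>l<Suc m. u' l a * cnj (u' l b))
        = (if a < m \<and> b < m then (\<Sum>l<m. u l a * cnj (u l b)) else 0) + w a * cnj (w b)"
      by (auto simp: sum.lessThan_Suc u'_def)
    consider "a < m" "b < m" | "b = m" | "a = m" "b < m" using ab by fastforce
    then show ?thesis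
    proof cases
      case 1
      have "r m b = cnj (r b m)" using 1 by (intro r_cnj) auto
      moreover have "r a b - r a m * r m b / r m m = (\<Sum>l<m. u l a * cnj (u l b))"
        using 1 u by simp
      ultimately show ?thesis unfolding split ww using 1 by (simp add: algebra_simps)
    next
      case 2
      show ?thesis unfolding split using 2 ab col[of a] by simp
    next
      case 3
      have "r m b = cnj (r b m)" using 3 by (intro r_cnj) auto
      also have "\<dots> = w m * cnj (w b)" using 3 col[of b] by simp
      finally show ?thesis unfolding split using 3 by simp
    qed
  qed
  then show ?case by blast
qed

section \<open>Product states\<close>

definition basis_without :: "nat \<Rightarrow> (nat \<Rightarrow> nat) \<Rightarrow> nat \<Rightarrow> (nat \<Rightarrow> nat) set" where
  "basis_without n d i = PiE ({..<n} - {i}) (\<lambda>j. {..<d j})"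

lemma sum_basis_split:
  assumes "i < n"
  shows "(\<Sum>x\<in>basis n d. G x) = (\<Sum>c<d i. \<Sum>z\<in>basis_without n d i. G (z(i:=c)))"
proof -
  have "basis n d = PiE (insert i ({..<n} - {i})) (\<lambda>j. {..<d j})"
    unfolding basis_def using assms by (simp add: insert_absorb)
  then show ?thesis unfolding basis_without_def by (simp only:) (rule sum_PiE_insert, simp)
qed

lemma basis_without_Suc: "basis_without (Suc k) d k = basis k d"
  by (simp add: basis_without_def basis_def lessThan_Suc)

lemma prod_state_Suc:
  "prod_state (Suc k) \<rho> (z(k:=a)) (w(k:=b)) = \<rho> k a b * prod_state k \<rho> z w"
  unfolding prod_state_def by (simp add: prod.lessThan_Suc mult.commute)

lemma quad_form_prod_state_Suc:
  assumes gram: "\<forall>a<d k. \<forall>b<d k. \<rho> k a b = (\<Sum>l<d k. u l a * cnj (u l b))"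
  shows "quad_form (basis (Suc k) d) (prod_state (Suc k) \<rho>) v
           = (\<Sum>l<d k. quad_form (basis k d) (prod_state k \<rho>)
                          (\<lambda>z. \<Sum>b<d k. cnj (u l b) * v (z(k:=b))))"
proof -
  let ?B = "basis k d" and ?f = "\<lambda>l z. \<Sum>b<d k. cnj (u l b) * v (z(k:=b))"
  have "quad_form (basis (Suc k) d) (prod_state (Suc k) \<rho>) v
      = (\<Sum>a<d k. \<Sum>z\<in>?B. \<Sum>b<d k. \<Sum>w\<in>?B.
           cnj (v (z(k:=a))) * (\<rho> k a b * prod_state k \<rho> z w) * v (w(k:=b)))"
    unfolding quad_form_def sum_basis_split[of k "Suc k", OF lessI] basis_without_Suc prod_state_Suc ..
  also have "\<dots> = (\<Sum>z\<in>?B. \<Sum>w\<in>?B. \<Sum>a<d k. \<Sum>b<d k.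
           cnj (v (z(k:=a))) * (\<rho> k a b * prod_state k \<rho> z w) * v (w(k:=b)))"
    by (rule sum_swap_pairs)
  also have "\<dots> = (\<Sum>z\<in>?B. \<Sum>w\<in>?B. prod_state k \<rho> z w *
           (\<Sum>a<d k. \<Sum>b<d k. cnj (v (z(k:=a))) * \<rho> k a b * v (w(k:=b))))"
    by (simp add: sum_distrib_left mult_ac)
  also have "\<dots> = (\<Sum>z\<in>?B. \<Sum>w\<in>?B. prod_state k \<rho> z w *
           (\<Sum>l<d k. cnj (?f l z) * ?f l w))"
    using bilinear_form_gram[where A="{..<d k}" and r="\<rho> k" and L="{..<d k}" and u=u] gram
    by simp
  also have "\<dots> = (\<Sum>z\<in>?B. \<Sum>w\<in>?B. \<Sum>l<d k. cnj (?f l z) * prod_state k \<rho> z w * ?f l w)"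
    unfolding sum_distrib_left by (simp only: mult.left_commute mult.assoc)
  also have "\<dots> = (\<Sum>z\<in>?B. \<Sum>l<d k. \<Sum>w\<in>?B. cnj (?f l z) * prod_state k \<rho> z w * ?f l w)"
    by (intro sum.cong refl) (rule sum.swap)
  also have "\<dots> = (\<Sum>l<d k. quad_form ?B (prod_state k \<rho>) (?f l))"
    unfolding quad_form_def by (rule sum.swap)
  finally show ?thesis .
qed

lemma quad_form_prod_state_nonneg:
  assumes "\<forall>i<k. psd_on {..<d i} (\<rho> i)"
  shows "0 \<le> Re (quad_form (basis k d) (prod_state k \<rho>) v)"
  using assms
proof (induction k arbitrary: v)
  case 0
  have "basis 0 d = {\<lambda>_. undefined}" by (simp add: basis_def)
  then show ?case
    by (simp add: quad_form_def prod_state_def mult.commute[of "cnj _"] flip: complex_norm_square)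
next
  case (Suc k)
  obtain u where "\<forall>a<d k. \<forall>b<d k. \<rho> k a b = (\<Sum>l<d k. u l a * cnj (u l b))"
    using psd_on_gram_decomposition Suc.prems by blast
  then have "quad_form (basis (Suc k) d) (prod_state (Suc k) \<rho>) v
      = (\<Sum>l<d k. quad_form (basis k d) (prod_state k \<rho>) (\<lambda>z. \<Sum>b<d k. cnj (u l b) * v (z(k:=b))))"
    by (rule quad_form_prod_state_Suc)
  then show ?case unfolding Re_sum using Suc by (auto intro: sum_nonneg)
qed

lemma in_basis_less: "x \<in> basis n d \<Longrightarrow> i < n \<Longrightarrow> x i < d i"
  by (auto simp: basis_def PiE_iff)

lemma fun_upd_in_basis: "x \<in> basis n d \<Longrightarrow> i < n \<Longrightarrow> c < d i \<Longrightarrow> x(i:=c) \<in> basis n d"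
  by (auto simp: basis_def PiE_iff extensional_def)

lemma expect_eq_sum: "expect n d \<sigma> Y = (\<Sum>x\<in>basis n d. \<Sum>z\<in>basis n d. \<sigma> x z * Y z x)"
  by (simp add: expect_def ktrace_def kmult_def)

lemma prod_state_split:
  assumes "i < n"
  shows "prod_state n \<rho> (z(i:=a)) (w(i:=b)) = \<rho> i a b * (\<Prod>j\<in>{..<n}-{i}. \<rho> j (z j) (w j))"
proof -
  have "prod_state n \<rho> (z(i:=a)) (w(i:=b))
      = \<rho> i a b * (\<Prod>j\<in>{..<n}-{i}. \<rho> j ((z(i:=a)) j) ((w(i:=b)) j))"
    unfolding prod_state_def using assms by (simp add: prod.remove[of "{..<n}" i])
  also have "(\<Prod>j\<in>{..<n}-{i}. \<rho> j ((z(i:=a)) j) ((w(i:=b)) j)) = (\<Prod>j\<in>{..<n}-{i}. \<rho> j (z j) (w j))"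
    by (rule prod.cong) auto
  finally show ?thesis .
qed

section \<open>Partial expectations\<close>

(* A = I \<otimes> A' with the identity on the i-th tensor factor. *)
definition trivial_on_factor :: "nat \<Rightarrow> kop \<Rightarrow> bool" where
  "trivial_on_factor i A \<longleftrightarrow> (\<forall>x y. x i \<noteq> y i \<longrightarrow> A x y = 0) \<and>
     (\<forall>x y b c. A (x(i:=b)) (y(i:=b)) = A (x(i:=c)) (y(i:=c)))"

lemma trivial_on_factorD:
  assumes "trivial_on_factor i A"
  shows "x i \<noteq> y i \<Longrightarrow> A x y = 0" and "A (x(i:=b)) (y(i:=b)) = A (x(i:=c)) (y(i:=c))"
  using assms unfolding trivial_on_factor_def by blast+

lemma trivial_on_factor_cond_exp: "trivial_on_factor i (cond_exp d \<rho> i Y)"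
  by (simp add: trivial_on_factor_def cond_exp_def)

lemma trivial_on_factor_cond_exp_other:
  assumes "i \<noteq> j" and triv: "trivial_on_factor i A"
  shows "trivial_on_factor i (cond_exp d \<rho> j A)"
  unfolding trivial_on_factor_def
proof (intro conjI allI impI)
  fix x y :: "nat \<Rightarrow> nat"
  assume "x i \<noteq> y i"
  then show "cond_exp d \<rho> j A x y = 0"
    using assms by (simp add: cond_exp_def trivial_on_factorD(1)[OF triv])
next
  fix x y :: "nat \<Rightarrow> nat" and b c
  have "A (x(i:=b, j:=b')) (y(i:=b, j:=a)) = A (x(i:=c, j:=b')) (y(i:=c, j:=a))" for a b'
    using trivial_on_factorD(2)[OF triv, of "x(j:=b')" b "y(j:=a)" c] assms(1)
    by (simp add: fun_upd_twist)
  then show "cond_exp d \<rho> j A (x(i:=b)) (y(i:=b)) = cond_exp d \<rho> j A (x(i:=c)) (y(i:=c))"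
    using assms(1) by (simp add: cond_exp_def)
qed

lemma trivial_on_factor_transpose:
  "trivial_on_factor i A \<Longrightarrow> trivial_on_factor i (\<lambda>x y. A y x)"
  unfolding trivial_on_factor_def by metis

lemma cond_exp_diff:
  "cond_exp d \<rho> i (\<lambda>x y. A x y - C x y) = (\<lambda>x y. cond_exp d \<rho> i A x y - cond_exp d \<rho> i C x y)"
  by (intro ext) (simp add: cond_exp_def sum_subtractf algebra_simps)

lemma cond_exp_idem:
  assumes "(\<Sum>a<d i. \<rho> i a a) = 1"
  shows "cond_exp d \<rho> i (cond_exp d \<rho> i Y) = cond_exp d \<rho> i Y"
proof (intro ext)
  fix x y
  let ?G = "\<Sum>a<d i. \<Sum>b<d i. \<rho> i a b * Y (x(i := b)) (y(i := a))"
  have "(\<Sum>b<d i. \<rho> i a b * (if b = a then ?G else 0)) = \<rho> i a a * ?G" if "a < d i" for a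
    using that by (subst sum_eq_single[where a=a]) auto
  then have "(\<Sum>a<d i. \<Sum>b<d i. \<rho> i a b * (if b = a then ?G else 0)) = ?G"
    using assms by (simp add: sum_distrib_right[symmetric])
  then show "cond_exp d \<rho> i (cond_exp d \<rho> i Y) x y = cond_exp d \<rho> i Y x y"
    by (simp add: cond_exp_def cong: if_cong)
qed

lemma cond_exp_diff_op:
  "(\<Sum>a<d i. \<rho> i a a) = 1 \<Longrightarrow> cond_exp d \<rho> i (diff_op d \<rho> i Y) = (\<lambda>x y. 0)"
  unfolding diff_op_def cond_exp_diff by (simp add: cond_exp_idem)

lemma cond_exp_commute:
  assumes "i \<noteq> j"
  shows "cond_exp d \<rho> i (cond_exp d \<rho> j Y) = cond_exp d \<rho> j (cond_exp d \<rho> i Y)"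
proof (intro ext)
  fix x y
  have upd: "x(i:=b, j:=c) = x(j:=c, i:=b)" for x :: "nat \<Rightarrow> nat" and b c
    using assms by (rule fun_upd_twist)
  have "cond_exp d \<rho> i (cond_exp d \<rho> j Y) x y = (if x i = y i \<and> x j = y j then
      (\<Sum>a<d i. \<Sum>b<d i. \<Sum>a'<d j. \<Sum>b'<d j.
         \<rho> i a b * \<rho> j a' b' * Y (x(i:=b, j:=b')) (y(i:=a, j:=a'))) else 0)"
    using assms by (simp add: cond_exp_def sum_distrib_left mult.assoc)
  also have "\<dots> = (if x i = y i \<and> x j = y j then
      (\<Sum>a'<d j. \<Sum>b'<d j. \<Sum>a<d i. \<Sum>b<d i.
         \<rho> i a b * \<rho> j a' b' * Y (x(i:=b, j:=b')) (y(i:=a, j:=a'))) else 0)"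
    by (simp only: sum.swap[of _ "{..<d i}" "{..<d j}"])
  also have "\<dots> = cond_exp d \<rho> j (cond_exp d \<rho> i Y) x y"
    using assms by (simp add: cond_exp_def sum_distrib_left upd mult.assoc mult.left_commute)
  finally show "cond_exp d \<rho> i (cond_exp d \<rho> j Y) x y = cond_exp d \<rho> j (cond_exp d \<rho> i Y) x y" .
qed

lemma cond_exp_transpose:
  "cond_exp d \<rho> i Y y x = cond_exp d (\<lambda>j a b. \<rho> j b a) i (\<lambda>x y. Y y x) x y"
  unfolding cond_exp_def by (simp add: eq_commute) (intro impI sum.swap)

lemma kmult_transpose: "kmult n d A C y x = kmult n d (\<lambda>x y. C y x) (\<lambda>x y. A y x) x y"
  unfolding kmult_def by (simp add: mult.commute)

lemma sum_basis_trivial_on_factor: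
  assumes i: "i < n" and triv: "trivial_on_factor i A" and c: "c < d i"
  shows "(\<Sum>w\<in>basis n d. A (x(i:=c)) w * G w)
           = (\<Sum>z\<in>basis_without n d i. A x (z(i := x i)) * G (z(i:=c)))"
proof -
  have "(\<Sum>w\<in>basis n d. A (x(i:=c)) w * G w)
      = (\<Sum>c'<d i. \<Sum>z\<in>basis_without n d i. A (x(i:=c)) (z(i:=c')) * G (z(i:=c')))"
    by (rule sum_basis_split[OF i])
  also have "\<dots> = (\<Sum>z\<in>basis_without n d i. A (x(i:=c)) (z(i:=c)) * G (z(i:=c)))"
    using c by (intro sum_eq_single) (auto simp: trivial_on_factorD(1)[OF triv])
  also have "\<dots> = (\<Sum>z\<in>basis_without n d i. A x (z(i := x i)) * G (z(i:=c)))"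
    using trivial_on_factorD(2)[OF triv, of x c _ "x i"] by simp
  finally show ?thesis .
qed

lemma cond_exp_kmult_left:
  assumes i: "i < n" and triv: "trivial_on_factor i A"
    and x: "x \<in> basis n d" and y: "y \<in> basis n d"
  shows "cond_exp d \<rho> i (kmult n d A Y) x y = kmult n d A (cond_exp d \<rho> i Y) x y"
proof (cases "x i = y i")
  case False
  have "kmult n d A (cond_exp d \<rho> i Y) x y = 0"
    unfolding kmult_def using False
    by (intro sum.neutral ballI) (auto simp: cond_exp_def trivial_on_factorD(1)[OF triv])
  then show ?thesis using False by (simp add: cond_exp_def)
next
  case True
  let ?Bw = "basis_without n d i"
  have "cond_exp d \<rho> i (kmult n d A Y) x y
      = (\<Sum>a<d i. \<Sum>b<d i. \<rho> i a b * (\<Sum>z\<in>?Bw. A x (z(i := x i)) * Y (z(i:=b)) (y(i:=a))))"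
    using True by (simp add: cond_exp_def kmult_def sum_basis_trivial_on_factor[OF i triv])
  also have "\<dots> = (\<Sum>z\<in>?Bw. A x (z(i := x i)) *
                     (\<Sum>a<d i. \<Sum>b<d i. \<rho> i a b * Y (z(i:=b)) (y(i:=a))))"
    by (simp add: sum_distrib_left mult.left_commute sum.swap[of _ _ ?Bw])
  also have "\<dots> = (\<Sum>z\<in>?Bw. A x (z(i := x i)) * cond_exp d \<rho> i Y (z(i := x i)) y)"
    by (simp add: cond_exp_def True)
  also have "\<dots> = kmult n d A (cond_exp d \<rho> i Y) x y"
    using sum_basis_trivial_on_factor[where c="x i" and x=x and d=d, OF i triv in_basis_less[OF x i]]
    by (simp add: kmult_def)
  finally show ?thesis .
qed

(* Transposition replaces rho_i by its transpose and reverses products, which reduces this to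
   the left-hand version. *)
lemma cond_exp_kmult_right:
  assumes i: "i < n" and triv: "trivial_on_factor i A"
    and x: "x \<in> basis n d" and y: "y \<in> basis n d"
  shows "cond_exp d \<rho> i (kmult n d Y A) x y = kmult n d (cond_exp d \<rho> i Y) A x y"
proof -
  let ?\<rho>T = "\<lambda>j a b. \<rho> j b a"
  have YA: "(\<lambda>x y. kmult n d Y A y x) = kmult n d (\<lambda>x y. A y x) (\<lambda>x y. Y y x)"
    by (intro ext) (rule kmult_transpose)
  have EY: "(\<lambda>x y. cond_exp d ?\<rho>T i (\<lambda>x y. Y y x) y x) = cond_exp d \<rho> i Y"
    using cond_exp_transpose[of d ?\<rho>T i "\<lambda>x y. Y y x"] by (intro ext) simp
  have "cond_exp d \<rho> i (kmult n d Y A) x y = cond_exp d ?\<rho>T i (\<lambda>x y. kmult n d Y A y x) y x"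
    by (rule cond_exp_transpose)
  also have "\<dots> = kmult n d (\<lambda>x y. A y x) (cond_exp d ?\<rho>T i (\<lambda>x y. Y y x)) y x"
    unfolding YA by (rule cond_exp_kmult_left[OF i trivial_on_factor_transpose[OF triv] y x])
  also have "\<dots> = kmult n d (cond_exp d \<rho> i Y) A x y"
    by (subst kmult_transpose) (simp only: EY)
  finally show ?thesis .
qed

lemma hermitian_on_cond_exp:
  assumes i: "i < n" and herm_\<rho>: "hermitian_on {..<d i} (\<rho> i)"
    and herm_Y: "hermitian_on (basis n d) Y"
  shows "hermitian_on (basis n d) (cond_exp d \<rho> i Y)"
  unfolding hermitian_on_def
proof (intro ballI)
  fix x y assume x: "x \<in> basis n d" and y: "y \<in> basis n d"
  have "\<rho> i a b * Y (x(i:=b)) (y(i:=a)) = cnj (\<rho> i b a * Y (y(i:=a)) (x(i:=b)))"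
    if "a < d i" "b < d i" for a b
    using that hermitian_onD[OF herm_\<rho>, of a b]
      hermitian_onD[OF herm_Y fun_upd_in_basis[OF x i] fun_upd_in_basis[OF y i]]
    by simp
  then have "(\<Sum>a<d i. \<Sum>b<d i. \<rho> i a b * Y (x(i:=b)) (y(i:=a)))
      = cnj (\<Sum>a<d i. \<Sum>b<d i. \<rho> i a b * Y (y(i:=b)) (x(i:=a)))"
    unfolding cnj_sum by (subst sum.swap) simp
  then show "cond_exp d \<rho> i Y x y = cnj (cond_exp d \<rho> i Y y x)"
    by (simp add: cond_exp_def eq_commute)
qed

lemma expect_prod_state_split:
  assumes i: "i < n"
  shows "expect n d (prod_state n \<rho>) Y
           = (\<Sum>u\<in>basis_without n d i. \<Sum>w\<in>basis_without n d i.
                (\<Prod>j\<in>{..<n}-{i}. \<rho> j (u j) (w j)) *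
                (\<Sum>a<d i. \<Sum>b<d i. \<rho> i a b * Y (w(i:=b)) (u(i:=a))))"
proof -
  let ?R = "\<lambda>u w. \<Prod>j\<in>{..<n}-{i}. \<rho> j (u j) (w j)"
  have "expect n d (prod_state n \<rho>) Y
      = (\<Sum>a<d i. \<Sum>u\<in>basis_without n d i. \<Sum>b<d i. \<Sum>w\<in>basis_without n d i.
           \<rho> i a b * ?R u w * Y (w(i:=b)) (u(i:=a)))"
    by (simp add: expect_eq_sum sum_basis_split[OF i] prod_state_split[OF i])
  also have "\<dots> = (\<Sum>u\<in>basis_without n d i. \<Sum>w\<in>basis_without n d i. \<Sum>a<d i. \<Sum>b<d i.
           \<rho> i a b * ?R u w * Y (w(i:=b)) (u(i:=a)))"
    by (rule sum_swap_pairs)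
  finally show ?thesis by (simp add: sum_distrib_left mult_ac)
qed

lemma expect_cond_exp:
  assumes i: "i < n" and trace: "(\<Sum>a<d i. \<rho> i a a) = 1"
  shows "expect n d (prod_state n \<rho>) (cond_exp d \<rho> i Y) = expect n d (prod_state n \<rho>) Y"
proof -
  have "(\<Sum>a<d i. \<Sum>b<d i. \<rho> i a b * cond_exp d \<rho> i Y (w(i:=b)) (u(i:=a)))
      = (\<Sum>a<d i. \<Sum>b<d i. \<rho> i a b * Y (w(i:=b)) (u(i:=a)))" for u w :: "nat \<Rightarrow> nat"
  proof -
    let ?G = "\<Sum>a<d i. \<Sum>b<d i. \<rho> i a b * Y (w(i:=b)) (u(i:=a))"
    have "(\<Sum>b<d i. \<rho> i a b * cond_exp d \<rho> i Y (w(i:=b)) (u(i:=a))) = \<rho> i a a * ?G"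
      if "a < d i" for a
      using that by (subst sum_eq_single[where a=a]) (auto simp: cond_exp_def)
    then show ?thesis using trace by (simp add: sum_distrib_right[symmetric])
  qed
  then show ?thesis by (simp add: expect_prod_state_split[OF i])
qed

section \<open>Martingale decomposition\<close>

lemma trivial_on_factors_override_on:
  assumes "finite J" and "\<forall>j\<in>J. trivial_on_factor j M"
  shows "M (override_on x y J) (override_on x y J) = M x x"
  using assms
proof (induction J rule: finite_induct)
  case empty
  then show ?case by simp
next
  case (insert j J)
  let ?z = "override_on x y J"
  have "override_on x y (insert j J) = ?z(j := y j)"
    by (auto simp: override_on_def)
  then have "M (override_on x y (insert j J)) (override_on x y (insert j J))
      = M (?z(j := y j)) (?z(j := y j))" by simp
  also have "\<dots> = M (?z(j := ?z j)) (?z(j := ?z j))"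
    by (rule trivial_on_factorD(2)) (use insert.prems in simp)
  also have "\<dots> = M x x"
    using insert by (simp only: fun_upd_triv) simp
  finally show ?case .
qed

lemma trivial_on_all_factors_scalar:
  assumes triv: "\<forall>j<n. trivial_on_factor j M"
  obtains c where "\<forall>x\<in>basis n d. \<forall>y\<in>basis n d. M x y = (if x = y then c else 0)"
proof -
  have diag: "M x x = M x0 x0" if "x \<in> basis n d" "x0 \<in> basis n d" for x x0
  proof -
    have "override_on x0 x {..<n} = x"
      using that by (auto simp: basis_def override_on_def PiE_def extensional_def)
    then show ?thesis
      using trivial_on_factors_override_on[of "{..<n}" M x0 x] triv by simp
  qed
  have off_diag: "M x y = 0" if "x \<in> basis n d" "y \<in> basis n d" "x \<noteq> y" for x y
  proof -
    have "\<not> (\<forall>j\<in>{..<n}. x j = y j)"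
      using that PiE_ext[of x "{..<n}" _ y] unfolding basis_def by metis
    then obtain j where "j < n" "x j \<noteq> y j" by blast
    then show ?thesis using triv trivial_on_factorD(1) by blast
  qed
  show ?thesis
  proof (cases "basis n d = {}")
    case True
    then show ?thesis by (intro that[of 0]) blast
  next
    case False
    then obtain x0 where x0: "x0 \<in> basis n d" by blast
    show ?thesis
    proof (rule that[of "M x0 x0"], intro ballI)
      fix x y assume "x \<in> basis n d" "y \<in> basis n d"
      then show "M x y = (if x = y then M x0 x0 else 0)"
        using diag[OF _ x0] off_diag by simp
    qed
  qed
qed

primrec cond_exp_upto :: "(nat \<Rightarrow> nat) \<Rightarrow> (nat \<Rightarrow> nat \<Rightarrow> nat \<Rightarrow> complex) \<Rightarrow> nat \<Rightarrow> kop \<Rightarrow> kop" where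
  "cond_exp_upto d \<rho> 0 Y = Y"
| "cond_exp_upto d \<rho> (Suc k) Y = cond_exp d \<rho> k (cond_exp_upto d \<rho> k Y)"

lemma trivial_on_factor_cond_exp_upto: "j < k \<Longrightarrow> trivial_on_factor j (cond_exp_upto d \<rho> k Y)"
proof (induction k)
  case 0
  then show ?case by simp
next
  case (Suc k)
  then show ?case
    by (cases "j = k") (simp_all add: trivial_on_factor_cond_exp trivial_on_factor_cond_exp_other)
qed

lemma diff_op_cond_exp_upto:
  "k \<le> i \<Longrightarrow> diff_op d \<rho> i (cond_exp_upto d \<rho> k Y) = cond_exp_upto d \<rho> k (diff_op d \<rho> i Y)"
proof (induction k)
  case 0
  then show ?case by simp
next
  case (Suc k)
  let ?W = "cond_exp_upto d \<rho> k Y"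
  have "i \<noteq> k" using Suc.prems by simp
  then have "diff_op d \<rho> i (cond_exp d \<rho> k ?W) = cond_exp d \<rho> k (diff_op d \<rho> i ?W)"
    by (simp add: diff_op_def cond_exp_diff cond_exp_commute[of i k])
  then show ?case using Suc by simp
qed

locale product_state =
  fixes n :: nat and d :: "nat \<Rightarrow> nat" and \<rho> :: "nat \<Rightarrow> nat \<Rightarrow> nat \<Rightarrow> complex"
  assumes density: "\<forall>i<n. density_matrix (d i) (\<rho> i)"
begin

abbreviation expect_mult :: "kop \<Rightarrow> kop \<Rightarrow> complex" where
  "expect_mult A C \<equiv> expect n d (prod_state n \<rho>) (kmult n d A C)"

lemma psd_factor: "i < n \<Longrightarrow> psd_on {..<d i} (\<rho> i)"
  using density by (simp add: density_matrix_iff)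

lemma trace_factor: "i < n \<Longrightarrow> (\<Sum>a<d i. \<rho> i a a) = 1"
  using density by (simp add: density_matrix_iff)

lemma trace_prod_state: "(\<Sum>x\<in>basis n d. prod_state n \<rho> x x) = 1"
proof -
  have "(\<Sum>x\<in>basis n d. prod_state n \<rho> x x) = (\<Prod>i<n. \<Sum>a<d i. \<rho> i a a)"
    unfolding basis_def prod_state_def by (rule prod_sum_PiE[symmetric]) auto
  also have "\<dots> = 1" by (simp add: trace_factor)
  finally show ?thesis .
qed

lemma expect_mult_eq_sum:
  "expect_mult A C = (\<Sum>x\<in>basis n d. \<Sum>z\<in>basis n d. \<Sum>w\<in>basis n d. prod_state n \<rho> x z * A z w * C w x)"
  by (simp add: expect_eq_sum kmult_def sum_distrib_left mult.assoc)

lemma expect_mult_self_nonneg: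
  assumes herm: "hermitian_on (basis n d) Z"
  shows "0 \<le> Re (expect_mult Z Z)"
proof -
  let ?B = "basis n d"
  have "expect_mult Z Z = (\<Sum>x\<in>?B. \<Sum>w\<in>?B. \<Sum>z\<in>?B. prod_state n \<rho> x z * Z z w * Z w x)"
    unfolding expect_mult_eq_sum by (rule sum.cong[OF refl], rule sum.swap)
  also have "\<dots> = (\<Sum>w\<in>?B. \<Sum>x\<in>?B. \<Sum>z\<in>?B. prod_state n \<rho> x z * Z z w * Z w x)"
    by (rule sum.swap)
  also have "\<dots> = (\<Sum>w\<in>?B. quad_form ?B (prod_state n \<rho>) (\<lambda>z. Z z w))"
    unfolding quad_form_def
  proof (intro sum.cong refl)
    fix w x z assume "w \<in> ?B" "x \<in> ?B"
    then have "Z w x = cnj (Z x w)" by (rule hermitian_onD[OF herm])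
    then show "prod_state n \<rho> x z * Z z w * Z w x = cnj (Z x w) * prod_state n \<rho> x z * Z z w"
      by (simp add: mult_ac)
  qed
  finally show ?thesis
    using quad_form_prod_state_nonneg psd_factor by (simp add: Re_sum sum_nonneg)
qed

lemma expect_mult_add:
  "expect_mult (\<lambda>x y. U x y + V x y) (\<lambda>x y. U x y + V x y)
     = expect_mult U U + expect_mult U V + expect_mult V U + expect_mult V V"
  unfolding expect_mult_eq_sum by (simp add: algebra_simps sum.distrib)

lemma expect_mult_orthogonal:
  assumes i: "i < n" and triv: "trivial_on_factor i C" and zero: "cond_exp d \<rho> i A = (\<lambda>x y. 0)"
  shows "expect_mult A C = 0" and "expect_mult C A = 0"
proof -
  have "expect_mult A C = expect n d (prod_state n \<rho>) (cond_exp d \<rho> i (kmult n d A C))"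
    by (simp add: expect_cond_exp[where d=d and \<rho>=\<rho>, OF i trace_factor[OF i]])
  also have "\<dots> = expect_mult (cond_exp d \<rho> i A) C"
    by (simp add: expect_eq_sum cond_exp_kmult_right[OF i triv])
  finally show "expect_mult A C = 0" by (simp add: zero expect_eq_sum kmult_def)
  have "expect_mult C A = expect n d (prod_state n \<rho>) (cond_exp d \<rho> i (kmult n d C A))"
    by (simp add: expect_cond_exp[where d=d and \<rho>=\<rho>, OF i trace_factor[OF i]])
  also have "\<dots> = expect_mult C (cond_exp d \<rho> i A)"
    by (simp add: expect_eq_sum cond_exp_kmult_left[OF i triv])
  finally show "expect_mult C A = 0" by (simp add: zero expect_eq_sum kmult_def)
qed

lemma expect_mult_pythagoras:
  assumes i: "i < n"
  shows "expect_mult W W = expect_mult (cond_exp d \<rho> i W) (cond_exp d \<rho> i W)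
                         + expect_mult (diff_op d \<rho> i W) (diff_op d \<rho> i W)"
proof -
  have W: "W = (\<lambda>x y. cond_exp d \<rho> i W x y + diff_op d \<rho> i W x y)"
    by (simp add: diff_op_def)
  show ?thesis
    using expect_mult_add[of "cond_exp d \<rho> i W" "diff_op d \<rho> i W"]
      expect_mult_orthogonal[OF i trivial_on_factor_cond_exp
        cond_exp_diff_op[where d=d and \<rho>=\<rho>, OF trace_factor[OF i]]]
    by (simp flip: W)
qed

lemma hermitian_on_diff_op:
  assumes i: "i < n" and herm: "hermitian_on (basis n d) W"
  shows "hermitian_on (basis n d) (diff_op d \<rho> i W)"
  unfolding diff_op_def
  using herm hermitian_on_cond_exp[OF i _ herm] psd_factor[OF i]
  by (intro hermitian_on_diff) (auto simp: psd_on_def)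

lemma cond_exp_contraction:
  assumes i: "i < n" and herm: "hermitian_on (basis n d) W"
  shows "Re (expect_mult (cond_exp d \<rho> i W) (cond_exp d \<rho> i W)) \<le> Re (expect_mult W W)"
  using expect_mult_pythagoras[OF i, of W] expect_mult_self_nonneg[OF hermitian_on_diff_op[OF assms]]
  by simp

lemma hermitian_on_cond_exp_upto:
  "k \<le> n \<Longrightarrow> hermitian_on (basis n d) Y \<Longrightarrow> hermitian_on (basis n d) (cond_exp_upto d \<rho> k Y)"
proof (induction k)
  case 0
  then show ?case by simp
next
  case (Suc k)
  then show ?case
    using hermitian_on_cond_exp[of k n d \<rho>] psd_factor[of k] by (simp add: psd_on_def)
qed

lemma expect_cond_exp_upto:
  "k \<le> n \<Longrightarrow> expect n d (prod_state n \<rho>) (cond_exp_upto d \<rho> k Y) = expect n d (prod_state n \<rho>) Y"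
  by (induction k) (simp_all add: expect_cond_exp trace_factor)

lemma cond_exp_upto_contraction:
  assumes "k \<le> n" and "hermitian_on (basis n d) W"
  shows "Re (expect_mult (cond_exp_upto d \<rho> k W) (cond_exp_upto d \<rho> k W)) \<le> Re (expect_mult W W)"
  using assms
proof (induction k)
  case 0
  then show ?case by simp
next
  case (Suc k)
  then show ?case
    using cond_exp_contraction[of k "cond_exp_upto d \<rho> k W"] hermitian_on_cond_exp_upto[of k W]
    by fastforce
qed

lemma expect_mult_martingale_decomposition:
  "k \<le> n \<Longrightarrow> expect_mult X X
     = (\<Sum>j<k. expect_mult (cond_exp_upto d \<rho> j (diff_op d \<rho> j X))
                           (cond_exp_upto d \<rho> j (diff_op d \<rho> j X)))
       + expect_mult (cond_exp_upto d \<rho> k X) (cond_exp_upto d \<rho> k X)"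
proof (induction k)
  case 0
  then show ?case by simp
next
  case (Suc k)
  then have "k < n" by simp
  from expect_mult_pythagoras[OF this, of "cond_exp_upto d \<rho> k X"] Suc show ?case
    by (simp add: diff_op_cond_exp_upto)
qed

lemma expect_mult_scalar:
  assumes "\<forall>j<n. trivial_on_factor j M"
  shows "expect_mult M M = (expect n d (prod_state n \<rho>) M)\<^sup>2"
proof -
  obtain c where c: "\<forall>x\<in>basis n d. \<forall>y\<in>basis n d. M x y = (if x = y then c else 0)"
    using trivial_on_all_factors_scalar[OF assms] by blast
  have scalar: "expect n d (prod_state n \<rho>) Y = e"
    if "\<forall>x\<in>basis n d. \<forall>y\<in>basis n d. Y x y = (if x = y then e else 0)" for Y e
  proof -
    have "expect n d (prod_state n \<rho>) Y = (\<Sum>x\<in>basis n d. prod_state n \<rho> x x * e)"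
      unfolding expect_eq_sum using that
      by (intro sum.cong refl, subst sum_eq_single) (auto simp: basis_def finite_PiE)
    then show ?thesis by (simp add: trace_prod_state flip: sum_distrib_right)
  qed
  have "\<forall>x\<in>basis n d. \<forall>y\<in>basis n d. kmult n d M M x y = (if x = y then c * c else 0)"
    unfolding kmult_def using c
    by (intro ballI, subst sum_eq_single) (auto simp: basis_def finite_PiE)
  then show ?thesis using scalar c by (simp add: power2_eq_square)
qed

lemma variance_eq_sum_increments:
  "variance n d (prod_state n \<rho>) X
     = (\<Sum>j<n. expect_mult (cond_exp_upto d \<rho> j (diff_op d \<rho> j X))
                           (cond_exp_upto d \<rho> j (diff_op d \<rho> j X)))"
proof -
  let ?M = "cond_exp_upto d \<rho> n X"
  have "expect_mult ?M ?M = (expect n d (prod_state n \<rho>) X)\<^sup>2"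
    using expect_mult_scalar[of ?M] trivial_on_factor_cond_exp_upto expect_cond_exp_upto[of n X]
    by simp
  then show ?thesis
    unfolding variance_def using expect_mult_martingale_decomposition[of n X] by simp
qed

end

theorem theorem6p6:
  fixes n :: nat and d :: "nat \<Rightarrow> nat"
    and \<rho> :: "nat \<Rightarrow> nat \<Rightarrow> nat \<Rightarrow> complex" and X :: kop
  assumes dims: "\<forall>i<n. d i \<ge> 1"
    and states: "\<forall>i<n. density_matrix (d i) (\<rho> i)"
    and obs: "khermitian n d X"
  shows "Re (variance n d (prod_state n \<rho>) X)
           \<le> (\<Sum>i<n. Re (expect n d (prod_state n \<rho>)
                    (kmult n d (diff_op d \<rho> i X) (diff_op d \<rho> i X))))"
proof -
  interpret product_state n d \<rho> using states by unfold_locales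
  have herm: "hermitian_on (basis n d) X" using obs by (simp add: khermitian_iff)
  have "Re (variance n d (prod_state n \<rho>) X)
      = (\<Sum>i<n. Re (expect_mult (cond_exp_upto d \<rho> i (diff_op d \<rho> i X))
                                (cond_exp_upto d \<rho> i (diff_op d \<rho> i X))))"
    by (simp add: variance_eq_sum_increments Re_sum)
  also have "\<dots> \<le> (\<Sum>i<n. Re (expect_mult (diff_op d \<rho> i X) (diff_op d \<rho> i X)))"
    using cond_exp_upto_contraction hermitian_on_diff_op[OF _ herm] by (intro sum_mono) simp
  finally show ?thesis .
qed

end
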